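(* For every polyhedron $P\subseteq\mathbb R^n$ (nonempty), the Riesz space $\mathcal R(P)$ is strongly semisimple, and $P$ has no outgoing tangent.
   Context: A polyhedron is a finite union of simplexes in $\mathbb R^n$. For $y\in\mathbb R^n$ and a linear subspace $L$, $\mathsf{proj}_L(y)$ is the orthogonal projection. Frenet frame of a sequence $\{x_i\}$ converging to $x$: $u_1$ is its Frenet $1$-frame if $x_i\ne x$ for all $i$ and $u_1=\lim_i (x_i-x)/\|x_i-x\|$; a $k$-tuple $(u_1,\ldots,u_k)$ of pairwise orthogonal unit vectors is its Frenet $k$-frame if $(u_1,\ldots,u_{k-1})$ is its Frenet $(k-1)$-frame and $u_k=\lim_i\frac{x_i-x-\mathsf{proj}_{\mathbb Ru_1+\cdots+\mathbb Ru_{k-1}}(x_i-x)}{\|x_i-x-\mathsf{proj}_{\mathbb Ru_1+\cdots+\mathbb Ru_{k-1}}(x_i-x)\|}$ (nonzero denominators). Tangent: $u=(u_1,\ldots,u_k)$ is a tangent of $X$ at $x$ if $X$ contains a sequence converging to $x$ whose Frenet $k$-frame is $u$; it is outgoing if there are $\lambda_1,\ldots,\lambda_k>0$ with $C\cap X=C'\cap X$, where $C=\operatorname{conv}(x,x+\lambda_1u_1,\ldots,x+\lambda_1u_1+\cdots+\lambda_ku_k)$ and $C'=\operatorname{conv}(x,x+\lambda_1u_1,\ldots,x+\lambda_1u_1+\cdots+\lambda_{k-1}u_{k-1})$. $\mathcal R(X)$: restrictions to $X$ of functions on a closed $n$-cube $K\supseteq X$ that are continuous and affine linear on each simplex of some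 triangulation of $K$; a Riesz space under pointwise operations. Principal ideal generated by $g$: $\{f:|f|\le m|g|\text{ for some }m\in\mathbb N\}$. Strongly semisimple: every principal ideal is an intersection of maximal ideals. *)

theory Defs
  imports "HOL-Analysis.Analysis"
begin

definition simplicial_polyhedron :: "'a::euclidean_space set \<Rightarrow> bool" where
  "simplicial_polyhedron P \<longleftrightarrow>
     (\<exists>\<F>. finite \<F> \<and> (\<forall>S\<in>\<F>. \<exists>k. k simplex S) \<and> P = \<Union>\<F>)"

definition closed_cube :: "'a::euclidean_space set \<Rightarrow> bool" where
  "closed_cube K \<longleftrightarrow> (\<exists>a r. r > 0 \<and> K = cbox a (a + r *\<^sub>R One))"

definition pl_on :: "'a::euclidean_space set \<Rightarrow> ('a \<Rightarrow> real) \<Rightarrow> bool" where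
  "pl_on K f \<longleftrightarrow> continuous_on K f \<and>
     (\<exists>\<T>. triangulation \<T> \<and> \<Union>\<T> = K \<and>
        (\<forall>T\<in>\<T>. \<exists>w c. \<forall>y\<in>T. f y = w \<bullet> y + c))"

text \<open>R(X): restrictions to X (represented as functions vanishing off X).\<close>
definition RX :: "'a::euclidean_space set \<Rightarrow> ('a \<Rightarrow> real) set" where
  "RX X = {g. \<exists>K f. closed_cube K \<and> X \<subseteq> K \<and> pl_on K f \<and>
                   g = (\<lambda>y. if y \<in> X then f y else 0)}"

definition riesz_ideal :: "('a \<Rightarrow> real) set \<Rightarrow> ('a \<Rightarrow> real) set \<Rightarrow> bool" where
  "riesz_ideal R I \<longleftrightarrow> I \<subseteq> R \<and> (\<lambda>y. 0) \<in> I \<and>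
     (\<forall>f\<in>I. \<forall>g\<in>I. (\<lambda>y. f y + g y) \<in> I) \<and>
     (\<forall>c::real. \<forall>f\<in>I. (\<lambda>y. c * f y) \<in> I) \<and>
     (\<forall>f\<in>R. \<forall>g\<in>I. (\<forall>y. \<bar>f y\<bar> \<le> \<bar>g y\<bar>) \<longrightarrow> f \<in> I)"

definition maximal_riesz_ideal :: "('a \<Rightarrow> real) set \<Rightarrow> ('a \<Rightarrow> real) set \<Rightarrow> bool" where
  "maximal_riesz_ideal R I \<longleftrightarrow> riesz_ideal R I \<and> I \<noteq> R \<and>
     (\<forall>J. riesz_ideal R J \<and> I \<subseteq> J \<and> J \<noteq> R \<longrightarrow> J = I)"

definition principal_ideal :: "('a \<Rightarrow> real) set \<Rightarrow> ('a \<Rightarrow> real) \<Rightarrow> ('a \<Rightarrow> real) set" where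
  "principal_ideal R g = {f\<in>R. \<exists>m::nat. \<forall>y. \<bar>f y\<bar> \<le> real m * \<bar>g y\<bar>}"

definition strongly_semisimple :: "('a \<Rightarrow> real) set \<Rightarrow> bool" where
  "strongly_semisimple R \<longleftrightarrow>
     (\<forall>g\<in>R. \<exists>\<M>. (\<forall>I\<in>\<M>. maximal_riesz_ideal R I) \<and> principal_ideal R g = R \<inter> \<Inter>\<M>)"

definition proj_prefix :: "'a::euclidean_space list \<Rightarrow> nat \<Rightarrow> 'a \<Rightarrow> 'a" where
  "proj_prefix us k v = (\<Sum>j<k. (v \<bullet> us ! j) *\<^sub>R us ! j)"

text \<open>us = (u_1,...,u_k), k = length us \<ge> 1, is the Frenet k-frame of xs converging to x.
  (Unfolding of the recursive definition; k-th step uses the projection on the span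
   of the preceding, orthonormal, vectors.)\<close>
definition frenet_frame :: "(nat \<Rightarrow> 'a::euclidean_space) \<Rightarrow> 'a \<Rightarrow> 'a list \<Rightarrow> bool" where
  "frenet_frame xs x us \<longleftrightarrow> us \<noteq> [] \<and> xs \<longlonglongrightarrow> x \<and>
     (\<forall>i<length us. \<forall>j<length us. us ! i \<bullet> us ! j = (if i = j then 1 else 0)) \<and>
     (\<forall>k<length us.
        (\<forall>i. xs i - x - proj_prefix us k (xs i - x) \<noteq> 0) \<and>
        (\<lambda>i. (1 / norm (xs i - x - proj_prefix us k (xs i - x))) *\<^sub>R
               (xs i - x - proj_prefix us k (xs i - x))) \<longlonglongrightarrow> us ! k)"

definition tangent :: "'a::euclidean_space set \<Rightarrow> 'a \<Rightarrow> 'a list \<Rightarrow> bool" where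
  "tangent X x us \<longleftrightarrow> (\<exists>xs. (\<forall>i. xs i \<in> X) \<and> frenet_frame xs x us)"

definition frame_vertex :: "'a::euclidean_space \<Rightarrow> (nat \<Rightarrow> real) \<Rightarrow> 'a list \<Rightarrow> nat \<Rightarrow> 'a" where
  "frame_vertex x l us j = x + (\<Sum>i<j. l i *\<^sub>R us ! i)"

definition outgoing_tangent :: "'a::euclidean_space set \<Rightarrow> 'a \<Rightarrow> 'a list \<Rightarrow> bool" where
  "outgoing_tangent X x us \<longleftrightarrow> tangent X x us \<and>
     (\<exists>l. (\<forall>i<length us. l i > 0) \<and>
        (convex hull (frame_vertex x l us ` {..length us})) \<inter> X =
        (convex hull (frame_vertex x l us ` {..<length us})) \<inter> X)"

end

theory Submission
  imports Defs
begin

text \<open>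
  Every point x of P gives a maximal ideal of R(P), the functions vanishing at x, and the
  principal ideal of g is the intersection of these ideals over the zeros of g in P.  Indeed,
  cut P into finitely many polytopes on which f and g are both affine; on the part of such a
  polytope where g \<ge> 0, a function f vanishing wherever g does satisfies |f| \<le> M g with M
  read off at the vertices, and likewise where g \<le> 0.  Closure of R(P) under addition needs PL
  functions given on two different cubes to be extended to a common larger cube: composing
  with the clamp map onto the smaller cube does this, because clamp is affine on each box of
  a 3^n grid.

  For the tangents: infinitely many terms of the sequence lie in one simplex S of P, which
  therefore contains x.  For every facet inequality a \<bullet> y \<le> b of S that is tight at x, the
  first nonzero number among a \<bullet> u_1, ..., a \<bullet> u_k, if any, is negative.  Hence the point
  x + e (v_1 - x) + ... + e^k (v_k - x), where x, v_1, ..., v_k are the vertices of C, lies in S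
  for small e > 0.  It lies in C, but not in the hyperplane through x orthogonal to u_k, which contains C'.
\<close>

lemma pl_onI_cell_complex:
  fixes f :: "'a::euclidean_space \<Rightarrow> real"
  assumes "continuous_on K f" "finite \<M>"
    and "\<And>C. C \<in> \<M> \<Longrightarrow> polytope C"
    and "\<And>C1 C2. \<lbrakk>C1 \<in> \<M>; C2 \<in> \<M>\<rbrakk> \<Longrightarrow> C1 \<inter> C2 face_of C1"
    and "\<Union>\<M> = K"
    and affine: "\<And>C. C \<in> \<M> \<Longrightarrow> \<exists>w c. \<forall>y\<in>C. f y = w \<bullet> y + c"
  shows "pl_on K f"
proof -
  obtain \<T> where \<T>: "simplicial_complex \<T>" "\<Union>\<T> = \<Union>\<M>" "\<And>T. T \<in> \<T> \<Longrightarrow> \<exists>C\<in>\<M>. T \<subseteq> C"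
    using simplicial_subdivision_of_cell_complex[OF assms(2-4)] by metis
  have "triangulation \<T>"
    using \<T>(1) by (auto simp: simplicial_complex_def triangulation_def)
  moreover have "\<exists>w c. \<forall>y\<in>T. f y = w \<bullet> y + c" if "T \<in> \<T>" for T
    using \<T>(3)[OF that] affine by (meson subsetD)
  ultimately show ?thesis
    unfolding pl_on_def using assms(1,5) \<T>(2) by blast
qed

lemma pl_on_const:
  fixes K :: "'a::euclidean_space set"
  assumes "polytope K"
  shows "pl_on K (\<lambda>y. c)"
proof (rule pl_onI_cell_complex[where \<M>="{K}"])
  show "\<exists>w d. \<forall>y\<in>C. c = w \<bullet> y + d" for C :: "'a set"
    by (rule exI[of _ 0]) auto
qed (auto simp: assms face_of_refl polytope_imp_convex)

lemma pl_on_cmult: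
  assumes "pl_on K f"
  shows "pl_on K (\<lambda>y. c * f y)"
proof -
  obtain \<T> where \<T>: "triangulation \<T>" "\<Union>\<T> = K" "\<forall>T\<in>\<T>. \<exists>w d. \<forall>y\<in>T. f y = w \<bullet> y + d"
    and cont: "continuous_on K f"
    using assms unfolding pl_on_def by blast
  show ?thesis
    unfolding pl_on_def
  proof (intro conjI exI[of _ \<T>])
    show "continuous_on K (\<lambda>y. c * f y)"
      by (intro continuous_intros cont)
    show "\<forall>T\<in>\<T>. \<exists>w d. \<forall>y\<in>T. c * f y = w \<bullet> y + d"
    proof
      fix T assume "T \<in> \<T>"
      then obtain w d where "\<forall>y\<in>T. f y = w \<bullet> y + d" using \<T>(3) by blast
      then have "\<forall>y\<in>T. c * f y = (c *\<^sub>R w) \<bullet> y + c * d" by (simp add: algebra_simps)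
      then show "\<exists>w d. \<forall>y\<in>T. c * f y = w \<bullet> y + d" by blast
    qed
  qed (use \<T> in auto)
qed

lemma cell_complex_Int_triangulations:
  assumes "triangulation \<T>1" "triangulation \<T>2"
  defines "\<M> \<equiv> (\<lambda>(A, B). A \<inter> B) ` (\<T>1 \<times> \<T>2)"
  shows "finite \<M>" "\<And>C. C \<in> \<M> \<Longrightarrow> polytope C"
    "\<And>C1 C2. \<lbrakk>C1 \<in> \<M>; C2 \<in> \<M>\<rbrakk> \<Longrightarrow> C1 \<inter> C2 face_of C1"
proof -
  show "finite \<M>"
    using assms(1,2) by (auto simp: \<M>_def triangulation_def)
  show "polytope C" if C: "C \<in> \<M>" for C
  proof -
    obtain A B where "A \<in> \<T>1" "B \<in> \<T>2" "C = A \<inter> B" using C by (auto simp: \<M>_def)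
    then show ?thesis
      using assms(1,2) unfolding triangulation_def by (metis polytope_Int simplex_imp_polytope)
  qed
  show "C1 \<inter> C2 face_of C1" if C12: "C1 \<in> \<M>" "C2 \<in> \<M>" for C1 C2
  proof -
    obtain A B A' B' where AB: "A \<in> \<T>1" "B \<in> \<T>2" "A' \<in> \<T>1" "B' \<in> \<T>2"
      and C: "C1 = A \<inter> B" "C2 = A' \<inter> B'"
      using C12 by (auto simp: \<M>_def)
    have "(A \<inter> A') \<inter> (B \<inter> B') face_of A \<inter> B"
      using AB assms(1,2) by (intro face_of_Int_Int) (auto simp: triangulation_def)
    moreover have "(A \<inter> A') \<inter> (B \<inter> B') = C1 \<inter> C2"
      using C by blast
    ultimately show ?thesis
      using C by simp
  qed
qed

lemma pl_on_add:
  assumes "pl_on K f" "pl_on K g"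
  shows "pl_on K (\<lambda>y. f y + g y)"
proof -
  obtain \<T>1 where \<T>1: "triangulation \<T>1" "\<Union>\<T>1 = K" "\<forall>T\<in>\<T>1. \<exists>w c. \<forall>y\<in>T. f y = w \<bullet> y + c"
    and cont_f: "continuous_on K f"
    using assms(1) unfolding pl_on_def by blast
  obtain \<T>2 where \<T>2: "triangulation \<T>2" "\<Union>\<T>2 = K" "\<forall>T\<in>\<T>2. \<exists>w c. \<forall>y\<in>T. g y = w \<bullet> y + c"
    and cont_g: "continuous_on K g"
    using assms(2) unfolding pl_on_def by blast
  let ?\<M> = "(\<lambda>(A, B). A \<inter> B) ` (\<T>1 \<times> \<T>2)"
  show ?thesis
  proof (rule pl_onI_cell_complex[OF _ cell_complex_Int_triangulations[OF \<T>1(1) \<T>2(1)]])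
    show "continuous_on K (\<lambda>y. f y + g y)"
      by (intro continuous_intros cont_f cont_g)
    show "\<Union>?\<M> = K"
    proof
      show "\<Union>?\<M> \<subseteq> K" using \<T>1(2) by auto
      show "K \<subseteq> \<Union>?\<M>"
      proof
        fix y assume "y \<in> K"
        then obtain A B where "A \<in> \<T>1" "B \<in> \<T>2" "y \<in> A" "y \<in> B"
          using \<T>1(2) \<T>2(2) by blast
        then show "y \<in> \<Union>?\<M>" by blast
      qed
    qed
    show "\<exists>w c. \<forall>y\<in>C. f y + g y = w \<bullet> y + c" if C: "C \<in> ?\<M>" for C
    proof -
      obtain A B where "A \<in> \<T>1" "B \<in> \<T>2" "C = A \<inter> B" using C by auto
      moreover obtain w1 c1 where "\<forall>y\<in>A. f y = w1 \<bullet> y + c1" using \<T>1(3) \<open>A \<in> \<T>1\<close> by blast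
      moreover obtain w2 c2 where "\<forall>y\<in>B. g y = w2 \<bullet> y + c2" using \<T>2(3) \<open>B \<in> \<T>2\<close> by blast
      ultimately have "\<forall>y\<in>C. f y + g y = (w1 + w2) \<bullet> y + (c1 + c2)"
        by (simp add: inner_add_left)
      then show ?thesis by blast
    qed
  qed
qed

lemma polyhedron_affine_vimage:
  fixes L :: "'a::euclidean_space \<Rightarrow> 'b::euclidean_space"
  assumes "linear L" "polyhedron T"
  shows "polyhedron {y. L y + c \<in> T}"
proof -
  obtain \<H> where \<H>: "finite \<H>" "T = \<Inter>\<H>" "\<forall>h\<in>\<H>. \<exists>\<alpha> \<beta>. \<alpha> \<noteq> 0 \<and> h = {x. \<alpha> \<bullet> x \<le> \<beta>}"
    using assms(2) unfolding polyhedron_def by blast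
  have "polyhedron {y. L y + c \<in> h}" if h_in: "h \<in> \<H>" for h
  proof -
    obtain \<alpha> \<beta> where h: "h = {x. \<alpha> \<bullet> x \<le> \<beta>}" using \<H>(3) h_in by blast
    have "\<alpha> \<bullet> (L y + c) = adjoint L \<alpha> \<bullet> y + \<alpha> \<bullet> c" for y
      using adjoint_works[OF assms(1), of y \<alpha>] by (simp add: inner_add_right inner_commute)
    then have "{y. L y + c \<in> h} = {y. adjoint L \<alpha> \<bullet> y \<le> \<beta> - \<alpha> \<bullet> c}"
      by (auto simp: h)
    then show ?thesis by (simp add: polyhedron_halfspace_le)
  qed
  moreover have "{y. L y + c \<in> T} = \<Inter> ((\<lambda>h. {y. L y + c \<in> h}) ` \<H>)"
    using \<H>(2) by auto
  ultimately show ?thesis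
    using \<H>(1) by auto
qed

lemma face_of_affine_vimage:
  fixes L :: "'a::real_vector \<Rightarrow> 'b::real_vector"
  assumes "linear L" "F face_of T"
  shows "{y. L y + c \<in> F} face_of {y. L y + c \<in> T}"
proof -
  have "{y. L y + c \<in> F} = L -` ((\<lambda>z. z - c) ` F)"
    by force
  then have "convex {y. L y + c \<in> F}"
    using assms face_of_imp_convex convex_translation_subtract convex_linear_vimage by metis
  moreover have "{y. L y + c \<in> F} \<subseteq> {y. L y + c \<in> T}"
    using assms(2) face_of_imp_subset by blast
  moreover have "L p + c \<in> F \<and> L q + c \<in> F"
    if pq: "L p + c \<in> T" "L q + c \<in> T" and z: "L z + c \<in> F" and seg: "z \<in> open_segment p q"
    for p q z
  proof -
    obtain u where u: "0 < u" "u < 1" "z = (1 - u) *\<^sub>R p + u *\<^sub>R q"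
      using seg by (auto simp: in_segment)
    have "L z = (1 - u) *\<^sub>R L p + u *\<^sub>R L q"
      unfolding u(3) using assms(1) by (simp add: linear_add linear_scale)
    then have Lz: "L z + c = (1 - u) *\<^sub>R (L p + c) + u *\<^sub>R (L q + c)"
      by (simp add: algebra_simps)
    show ?thesis
    proof (cases "L p + c = L q + c")
      case True
      then show ?thesis using Lz z by (simp add: algebra_simps)
    next
      case False
      then have "L z + c \<in> open_segment (L p + c) (L q + c)"
        using Lz u by (auto simp: in_segment)
      then show ?thesis using assms(2) pq z unfolding face_of_def by blast
    qed
  qed
  ultimately show ?thesis
    unfolding face_of_def by blast
qed

lemma open_segment_real_endpoint:
  fixes p q z u lo hi :: real
  assumes "lo \<le> p" "p \<le> hi" "lo \<le> q" "q \<le> hi" "0 < u" "u < 1" "z = (1 - u) * p + u * q"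
    and "z = lo \<or> z = hi"
  shows "p = z"
proof -
  have "(1 - u) * (p - lo) \<ge> 0" "u * (q - lo) \<ge> 0" "(1 - u) * (hi - p) \<ge> 0" "u * (hi - q) \<ge> 0"
    using assms by auto
  moreover have "(1 - u) * (p - lo) + u * (q - lo) = z - lo" "(1 - u) * (hi - p) + u * (hi - q) = hi - z"
    using assms(7) by (simp_all add: algebra_simps)
  ultimately have "(z = lo \<longrightarrow> (1 - u) * (p - lo) = 0) \<and> (z = hi \<longrightarrow> (1 - u) * (hi - p) = 0)"
    by linarith
  then show ?thesis
    using assms by auto
qed

lemma open_segment_in_cbox_coordinatewise:
  fixes a b c d :: "'a::euclidean_space"
  assumes meet: "\<And>i t. \<lbrakk>i \<in> Basis; t \<in> {a \<bullet> i..b \<bullet> i}; t \<in> {c \<bullet> i..d \<bullet> i}\<rbrakk>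
             \<Longrightarrow> {a \<bullet> i..b \<bullet> i} \<subseteq> {c \<bullet> i..d \<bullet> i} \<or> t = a \<bullet> i \<or> t = b \<bullet> i"
    and pq: "p \<in> cbox a b" "q \<in> cbox a b" and z: "z \<in> cbox a b \<inter> cbox c d"
    and seg: "z \<in> open_segment p q"
  shows "p \<in> cbox c d"
  unfolding mem_box
proof
  fix i :: 'a assume i: "i \<in> Basis"
  obtain u where u: "0 < u" "u < 1" "z = (1 - u) *\<^sub>R p + u *\<^sub>R q"
    using seg by (auto simp: in_segment)
  have zi: "z \<bullet> i = (1 - u) * (p \<bullet> i) + u * (q \<bullet> i)"
    using u(3) by (simp add: inner_add_left)
  have coord: "x \<bullet> i \<in> {e \<bullet> i..f \<bullet> i}" if "x \<in> cbox e f" for x e f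
    using that i by (simp add: mem_box)
  have p_i: "p \<bullet> i \<in> {a \<bullet> i..b \<bullet> i}" and q_i: "q \<bullet> i \<in> {a \<bullet> i..b \<bullet> i}"
    and z_i: "z \<bullet> i \<in> {a \<bullet> i..b \<bullet> i}" "z \<bullet> i \<in> {c \<bullet> i..d \<bullet> i}"
    using coord pq z by auto
  consider "{a \<bullet> i..b \<bullet> i} \<subseteq> {c \<bullet> i..d \<bullet> i}" | "z \<bullet> i = a \<bullet> i \<or> z \<bullet> i = b \<bullet> i"
    using meet[OF i z_i] by blast
  then show "c \<bullet> i \<le> p \<bullet> i \<and> p \<bullet> i \<le> d \<bullet> i"
  proof cases
    case 1
    then show ?thesis using p_i by auto
  next
    case 2
    have "a \<bullet> i \<le> p \<bullet> i" "p \<bullet> i \<le> b \<bullet> i" "a \<bullet> i \<le> q \<bullet> i" "q \<bullet> i \<le> b \<bullet> i"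
      using p_i q_i by auto
    then have "p \<bullet> i = z \<bullet> i"
      using u(1,2) zi 2 by (rule open_segment_real_endpoint)
    then show ?thesis using z_i by auto
  qed
qed

lemma cbox_Int_face_of_cbox:
  fixes a b c d :: "'a::euclidean_space"
  assumes "\<And>i t. \<lbrakk>i \<in> Basis; t \<in> {a \<bullet> i..b \<bullet> i}; t \<in> {c \<bullet> i..d \<bullet> i}\<rbrakk>
             \<Longrightarrow> {a \<bullet> i..b \<bullet> i} \<subseteq> {c \<bullet> i..d \<bullet> i} \<or> t = a \<bullet> i \<or> t = b \<bullet> i"
  shows "cbox a b \<inter> cbox c d face_of cbox a b"
  unfolding face_of_def
proof (intro conjI ballI impI)
  show "convex (cbox a b \<inter> cbox c d)"
    by (simp add: convex_Int)
next
  fix p q z assume "p \<in> cbox a b" "q \<in> cbox a b" "z \<in> cbox a b \<inter> cbox c d" "z \<in> open_segment p q"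
  then show "p \<in> cbox a b \<inter> cbox c d"
    using open_segment_in_cbox_coordinatewise[OF assms] by blast
next
  fix p q z assume "p \<in> cbox a b" "q \<in> cbox a b" "z \<in> cbox a b \<inter> cbox c d" "z \<in> open_segment p q"
  then show "q \<in> cbox a b \<inter> cbox c d"
    using open_segment_in_cbox_coordinatewise[OF assms, of q p z] by (simp add: open_segment_commute)
qed blast

lemma clamp_inner:
  assumes "\<forall>i\<in>Basis. a \<bullet> i \<le> b \<bullet> i" "j \<in> Basis"
  shows "clamp a b y \<bullet> j = (if y \<bullet> j < a \<bullet> j then a \<bullet> j else if y \<bullet> j \<le> b \<bullet> j then y \<bullet> j else b \<bullet> j)"
  using assms by (simp add: clamp_def)

text \<open>
  A grid box is indexed by \<sigma> with \<sigma> i \<in> {0, 1, 2} selecting, in coordinate i, one of the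
  intervals [a' \<bullet> i, a \<bullet> i], [a \<bullet> i, b \<bullet> i], [b \<bullet> i, b' \<bullet> i] into which a and b cut [a' \<bullet> i, b' \<bullet> i].
\<close>

definition grid_lo :: "real \<Rightarrow> real \<Rightarrow> real \<Rightarrow> nat \<Rightarrow> real" where
  "grid_lo a' a b s = (if s = 0 then a' else if s = 1 then a else b)"

definition grid_hi :: "real \<Rightarrow> real \<Rightarrow> real \<Rightarrow> nat \<Rightarrow> real" where
  "grid_hi a b b' s = (if s = 0 then a else if s = 1 then b else b')"

definition grid_box :: "'a::euclidean_space \<Rightarrow> 'a \<Rightarrow> 'a \<Rightarrow> 'a \<Rightarrow> ('a \<Rightarrow> nat) \<Rightarrow> 'a set" where
  "grid_box a' a b b' \<sigma> =
     cbox (\<Sum>i\<in>Basis. grid_lo (a' \<bullet> i) (a \<bullet> i) (b \<bullet> i) (\<sigma> i) *\<^sub>R i)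
          (\<Sum>i\<in>Basis. grid_hi (a \<bullet> i) (b \<bullet> i) (b' \<bullet> i) (\<sigma> i) *\<^sub>R i)"

lemma mem_grid_box:
  "y \<in> grid_box a' a b b' \<sigma> \<longleftrightarrow>
     (\<forall>i\<in>Basis. grid_lo (a' \<bullet> i) (a \<bullet> i) (b \<bullet> i) (\<sigma> i) \<le> y \<bullet> i \<and>
                y \<bullet> i \<le> grid_hi (a \<bullet> i) (b \<bullet> i) (b' \<bullet> i) (\<sigma> i))"
  by (simp add: grid_box_def mem_box)

lemma grid_intervals_meet_at_endpoint:
  assumes "a' \<le> a" "a \<le> b" "b \<le> b'" "s \<in> {0, 1, 2}" "s' \<in> {0, 1, 2}" "s \<noteq> s'"
    and "t \<in> {grid_lo a' a b s..grid_hi a b b' s}" "t \<in> {grid_lo a' a b s'..grid_hi a b b' s'}"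
  shows "t = grid_lo a' a b s \<or> t = grid_hi a b b' s"
  using assms by (auto simp: grid_lo_def grid_hi_def)

definition clamp_linear :: "('a::euclidean_space \<Rightarrow> nat) \<Rightarrow> 'a \<Rightarrow> 'a" where
  "clamp_linear \<sigma> y = (\<Sum>i\<in>Basis. (y \<bullet> i) *\<^sub>R (if \<sigma> i = 1 then i else 0))"

definition clamp_offset :: "'a::euclidean_space \<Rightarrow> 'a \<Rightarrow> ('a \<Rightarrow> nat) \<Rightarrow> 'a" where
  "clamp_offset a b \<sigma> = (\<Sum>i\<in>Basis. (if \<sigma> i = 0 then a \<bullet> i else if \<sigma> i = 1 then 0 else b \<bullet> i) *\<^sub>R i)"

lemma linear_clamp_linear: "linear (clamp_linear \<sigma>)"
  unfolding clamp_linear_def linear_iff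
  by (auto simp: inner_add_left scaleR_add_left sum.distrib scaleR_sum_right)

lemma clamp_linear_inner:
  "j \<in> Basis \<Longrightarrow> clamp_linear \<sigma> y \<bullet> j = (if \<sigma> j = 1 then y \<bullet> j else 0)"
proof -
  assume j: "j \<in> Basis"
  have "clamp_linear \<sigma> y = (\<Sum>i\<in>Basis. (if \<sigma> i = 1 then y \<bullet> i else 0) *\<^sub>R i)"
    unfolding clamp_linear_def by (rule sum.cong) auto
  then show ?thesis using j by simp
qed

definition clamp_cell :: "'a::euclidean_space \<Rightarrow> 'a \<Rightarrow> 'a \<Rightarrow> 'a \<Rightarrow> ('a \<Rightarrow> nat) \<Rightarrow> 'a set \<Rightarrow> 'a set" where
  "clamp_cell a' a b b' \<sigma> T =
     grid_box a' a b b' \<sigma> \<inter> {y. clamp_linear \<sigma> y + clamp_offset a b \<sigma> \<in> T}"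

context
  fixes a' a b b' :: "'a::euclidean_space"
  assumes ordered: "\<forall>i\<in>Basis. a' \<bullet> i \<le> a \<bullet> i \<and> a \<bullet> i \<le> b \<bullet> i \<and> b \<bullet> i \<le> b' \<bullet> i"
begin

abbreviation grid_indices :: "('a \<Rightarrow> nat) set" where
  "grid_indices \<equiv> Basis \<rightarrow>\<^sub>E {0, 1, 2}"

lemma clamp_eq_on_grid_box:
  assumes "\<sigma> \<in> grid_indices" "y \<in> grid_box a' a b b' \<sigma>"
  shows "clamp a b y = clamp_linear \<sigma> y + clamp_offset a b \<sigma>"
proof (rule euclidean_eqI)
  fix j :: 'a assume j: "j \<in> Basis"
  have lo: "grid_lo (a' \<bullet> j) (a \<bullet> j) (b \<bullet> j) (\<sigma> j) \<le> y \<bullet> j"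
    and hi: "y \<bullet> j \<le> grid_hi (a \<bullet> j) (b \<bullet> j) (b' \<bullet> j) (\<sigma> j)" and ab: "a \<bullet> j \<le> b \<bullet> j"
    using assms(2) ordered j by (auto simp: mem_grid_box)
  have rhs: "(clamp_linear \<sigma> y + clamp_offset a b \<sigma>) \<bullet> j =
      (if \<sigma> j = 0 then a \<bullet> j else if \<sigma> j = 1 then y \<bullet> j else b \<bullet> j)"
    using j by (simp add: inner_add_left clamp_linear_inner clamp_offset_def)
  have clamp_j: "clamp a b y \<bullet> j =
      (if y \<bullet> j < a \<bullet> j then a \<bullet> j else if y \<bullet> j \<le> b \<bullet> j then y \<bullet> j else b \<bullet> j)"
    using ordered j by (intro clamp_inner) auto
  have "\<sigma> j \<in> {0, 1, 2}" using assms(1) j by blast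
  then consider "\<sigma> j = 0" | "\<sigma> j = 1" | "\<sigma> j = 2" by auto
  then show "clamp a b y \<bullet> j = (clamp_linear \<sigma> y + clamp_offset a b \<sigma>) \<bullet> j"
  proof cases
    case 1
    then have "y \<bullet> j \<le> a \<bullet> j" using hi by (simp add: grid_hi_def)
    then show ?thesis using 1 ab unfolding clamp_j rhs by auto
  next
    case 2
    then have "a \<bullet> j \<le> y \<bullet> j" "y \<bullet> j \<le> b \<bullet> j" using lo hi by (simp_all add: grid_lo_def grid_hi_def)
    then show ?thesis using 2 unfolding clamp_j rhs by auto
  next
    case 3
    then have "b \<bullet> j \<le> y \<bullet> j" using lo by (simp add: grid_lo_def)
    then show ?thesis using 3 ab unfolding clamp_j rhs by auto
  qed
qed

lemma grid_box_subset:
  assumes "\<sigma> \<in> grid_indices"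
  shows "grid_box a' a b b' \<sigma> \<subseteq> cbox a' b'"
proof
  fix y assume y: "y \<in> grid_box a' a b b' \<sigma>"
  have "a' \<bullet> i \<le> y \<bullet> i \<and> y \<bullet> i \<le> b' \<bullet> i" if i: "i \<in> Basis" for i
  proof -
    have "a' \<bullet> i \<le> grid_lo (a' \<bullet> i) (a \<bullet> i) (b \<bullet> i) (\<sigma> i)"
      "grid_hi (a \<bullet> i) (b \<bullet> i) (b' \<bullet> i) (\<sigma> i) \<le> b' \<bullet> i"
      using ordered i by (auto simp: grid_lo_def grid_hi_def)
    then show ?thesis using y i unfolding mem_grid_box by force
  qed
  then show "y \<in> cbox a' b'" by (simp add: mem_box)
qed

lemma grid_box_cover:
  assumes "y \<in> cbox a' b'"
  shows "\<exists>\<sigma>\<in>grid_indices. y \<in> grid_box a' a b b' \<sigma>"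
proof
  let ?\<sigma> = "restrict (\<lambda>i. if y \<bullet> i < a \<bullet> i then 0 else if y \<bullet> i \<le> b \<bullet> i then 1 else 2) Basis"
  show "?\<sigma> \<in> grid_indices" by auto
  show "y \<in> grid_box a' a b b' ?\<sigma>"
    using assms by (auto simp: mem_grid_box mem_box grid_lo_def grid_hi_def)
qed

lemma grid_box_Int_face_of:
  assumes "\<sigma> \<in> grid_indices" "\<tau> \<in> grid_indices"
  shows "grid_box a' a b b' \<sigma> \<inter> grid_box a' a b b' \<tau> face_of grid_box a' a b b' \<sigma>"
  unfolding grid_box_def
proof (rule cbox_Int_face_of_cbox, goal_cases)
  case (1 i t)
  have "\<sigma> i \<in> {0, 1, 2}" "\<tau> i \<in> {0, 1, 2}"
    using assms 1(1) by blast+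
  moreover have "a' \<bullet> i \<le> a \<bullet> i" "a \<bullet> i \<le> b \<bullet> i" "b \<bullet> i \<le> b' \<bullet> i"
    using ordered 1(1) by auto
  ultimately show ?case
    using 1(2,3) grid_intervals_meet_at_endpoint[of "a' \<bullet> i" "a \<bullet> i" "b \<bullet> i" "b' \<bullet> i" "\<sigma> i" "\<tau> i" t]
    by (cases "\<sigma> i = \<tau> i") (simp_all add: inner_sum_left_Basis[OF 1(1)])
qed

lemma mem_clamp_cell:
  assumes "\<sigma> \<in> grid_indices"
  shows "y \<in> clamp_cell a' a b b' \<sigma> T \<longleftrightarrow> y \<in> grid_box a' a b b' \<sigma> \<and> clamp a b y \<in> T"
  using clamp_eq_on_grid_box[OF assms] by (auto simp: clamp_cell_def)

lemma polytope_clamp_cell: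
  "polytope T \<Longrightarrow> polytope (clamp_cell a' a b b' \<sigma> T)"
  unfolding clamp_cell_def grid_box_def
  by (intro polytope_Int_polyhedron polytope_interval polyhedron_affine_vimage
      linear_clamp_linear polytope_imp_polyhedron)

lemma clamp_cell_Int_face_of:
  assumes "\<sigma> \<in> grid_indices" "\<tau> \<in> grid_indices" "T1 \<inter> T2 face_of T1"
  shows "clamp_cell a' a b b' \<sigma> T1 \<inter> clamp_cell a' a b b' \<tau> T2 face_of clamp_cell a' a b b' \<sigma> T1"
proof -
  have "(grid_box a' a b b' \<sigma> \<inter> grid_box a' a b b' \<tau>) \<inter>
      {y. clamp_linear \<sigma> y + clamp_offset a b \<sigma> \<in> T1 \<inter> T2} face_of clamp_cell a' a b b' \<sigma> T1"
    unfolding clamp_cell_def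
    by (intro face_of_Int_Int grid_box_Int_face_of face_of_affine_vimage linear_clamp_linear assms)
  moreover have "(grid_box a' a b b' \<sigma> \<inter> grid_box a' a b b' \<tau>) \<inter>
      {y. clamp_linear \<sigma> y + clamp_offset a b \<sigma> \<in> T1 \<inter> T2} =
      clamp_cell a' a b b' \<sigma> T1 \<inter> clamp_cell a' a b b' \<tau> T2"
    using mem_clamp_cell[OF assms(1)] mem_clamp_cell[OF assms(2)] clamp_eq_on_grid_box[OF assms(1)]
    by auto
  ultimately show ?thesis by simp
qed

lemma affine_on_clamp_cell:
  assumes "\<sigma> \<in> grid_indices" "\<forall>y\<in>T. f y = w \<bullet> y + c"
  shows "\<exists>w' c'. \<forall>y\<in>clamp_cell a' a b b' \<sigma> T. f (clamp a b y) = w' \<bullet> y + c'"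
proof -
  have "f (clamp a b y) = adjoint (clamp_linear \<sigma>) w \<bullet> y + (w \<bullet> clamp_offset a b \<sigma> + c)"
    if "y \<in> clamp_cell a' a b b' \<sigma> T" for y
  proof -
    have y: "y \<in> grid_box a' a b b' \<sigma>" "clamp a b y \<in> T"
      using that mem_clamp_cell[OF assms(1)] by auto
    have "f (clamp a b y) = w \<bullet> clamp a b y + c"
      using assms(2) y(2) by blast
    also have "\<dots> = w \<bullet> clamp_linear \<sigma> y + (w \<bullet> clamp_offset a b \<sigma> + c)"
      using clamp_eq_on_grid_box[OF assms(1) y(1)] by (simp add: inner_add_right)
    also have "w \<bullet> clamp_linear \<sigma> y = adjoint (clamp_linear \<sigma>) w \<bullet> y"
      using adjoint_works[OF linear_clamp_linear, of y \<sigma> w] by (simp add: inner_commute)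
    finally show ?thesis .
  qed
  then show ?thesis by blast
qed

lemma Union_clamp_cells:
  assumes "\<Union>\<T> = cbox a b"
  shows "\<Union>((\<lambda>(\<sigma>, T). clamp_cell a' a b b' \<sigma> T) ` (grid_indices \<times> \<T>)) = cbox a' b'"
proof
  show "\<Union>((\<lambda>(\<sigma>, T). clamp_cell a' a b b' \<sigma> T) ` (grid_indices \<times> \<T>)) \<subseteq> cbox a' b'"
    using grid_box_subset by (auto simp: clamp_cell_def)
  show "cbox a' b' \<subseteq> \<Union>((\<lambda>(\<sigma>, T). clamp_cell a' a b b' \<sigma> T) ` (grid_indices \<times> \<T>))"
  proof
    fix y assume "y \<in> cbox a' b'"
    then obtain \<sigma> where \<sigma>: "\<sigma> \<in> grid_indices" "y \<in> grid_box a' a b b' \<sigma>"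
      using grid_box_cover by blast
    obtain T where "T \<in> \<T>" "clamp a b y \<in> T"
      using assms ordered clamp_in_interval by blast
    then show "y \<in> \<Union>((\<lambda>(\<sigma>, T). clamp_cell a' a b b' \<sigma> T) ` (grid_indices \<times> \<T>))"
      using \<sigma> mem_clamp_cell by blast
  qed
qed

lemma pl_on_clamp:
  assumes "pl_on (cbox a b) f"
  shows "pl_on (cbox a' b') (\<lambda>y. f (clamp a b y))"
proof -
  obtain \<T> where \<T>: "triangulation \<T>" "\<Union>\<T> = cbox a b" "\<forall>T\<in>\<T>. \<exists>w c. \<forall>y\<in>T. f y = w \<bullet> y + c"
    and cont: "continuous_on (cbox a b) f"
    using assms unfolding pl_on_def by blast
  let ?\<M> = "(\<lambda>(\<sigma>, T). clamp_cell a' a b b' \<sigma> T) ` (grid_indices \<times> \<T>)"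
  show ?thesis
  proof (rule pl_onI_cell_complex[where \<M>="?\<M>"])
    show "continuous_on (cbox a' b') (\<lambda>y. f (clamp a b y))"
      using cont by (rule clamp_continuous_on)
    show "finite ?\<M>"
      using \<T>(1) by (auto simp: triangulation_def finite_PiE)
    show "polytope C" if C: "C \<in> ?\<M>" for C
    proof -
      obtain \<sigma> T where "T \<in> \<T>" and C_eq: "C = clamp_cell a' a b b' \<sigma> T"
        using C by auto
      then have "polytope T"
        using \<T>(1) unfolding triangulation_def by (meson simplex_imp_polytope)
      then show ?thesis
        unfolding C_eq by (rule polytope_clamp_cell)
    qed
    show "C1 \<inter> C2 face_of C1" if C12: "C1 \<in> ?\<M>" "C2 \<in> ?\<M>" for C1 C2
    proof -
      obtain \<sigma> T1 \<tau> T2 where \<sigma>: "\<sigma> \<in> grid_indices" "\<tau> \<in> grid_indices"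
        and T: "T1 \<in> \<T>" "T2 \<in> \<T>" and C: "C1 = clamp_cell a' a b b' \<sigma> T1" "C2 = clamp_cell a' a b b' \<tau> T2"
        using C12 by auto
      have "T1 \<inter> T2 face_of T1"
        using \<T>(1) T unfolding triangulation_def by blast
      then show ?thesis
        unfolding C by (rule clamp_cell_Int_face_of[OF \<sigma>])
    qed
    show "\<exists>w c. \<forall>y\<in>C. f (clamp a b y) = w \<bullet> y + c" if C: "C \<in> ?\<M>" for C
    proof -
      obtain \<sigma> T where \<sigma>: "\<sigma> \<in> grid_indices" and "T \<in> \<T>" and C_eq: "C = clamp_cell a' a b b' \<sigma> T"
        using C by auto
      then obtain w c where "\<forall>y\<in>T. f y = w \<bullet> y + c"
        using \<T>(3) by blast
      then show ?thesis
        unfolding C_eq by (rule affine_on_clamp_cell[OF \<sigma>])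
    qed
    show "\<Union>?\<M> = cbox a' b'"
      using \<T>(2) by (rule Union_clamp_cells)
  qed
qed

end

lemma closed_cube_cbox:
  assumes "closed_cube K"
  obtains a b where "K = cbox a b" "\<forall>i\<in>Basis. a \<bullet> i \<le> b \<bullet> i"
proof -
  obtain a r where "r > 0" "K = cbox a (a + r *\<^sub>R One)"
    using assms unfolding closed_cube_def by blast
  then show ?thesis
    using that[of a "a + r *\<^sub>R One"] by (auto simp: inner_add_left)
qed

lemma closed_cube_polytope: "closed_cube K \<Longrightarrow> polytope K"
  by (metis closed_cube_cbox polytope_interval)

lemma bounded_subset_closed_cube:
  fixes S :: "'a::euclidean_space set"
  assumes "bounded S"
  obtains K where "closed_cube K" "S \<subseteq> K"
proof -
  obtain B where B: "B > 0" "\<forall>x\<in>S. norm x \<le> B"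
    using assms unfolding bounded_pos by blast
  have "(- B) *\<^sub>R One + (2 * B) *\<^sub>R One = B *\<^sub>R (One :: 'a)"
    using scaleR_add_left[of "- B" "2 * B" "One :: 'a", symmetric] by simp
  then have "closed_cube (cbox ((- B) *\<^sub>R One) (B *\<^sub>R (One :: 'a)))"
    unfolding closed_cube_def using B(1) by (metis mult_pos_pos zero_less_numeral)
  moreover have "S \<subseteq> cbox ((- B) *\<^sub>R One) (B *\<^sub>R One)"
  proof
    fix x assume "x \<in> S"
    then have "\<bar>x \<bullet> i\<bar> \<le> B" if "i \<in> Basis" for i
      using B(2) Basis_le_norm[OF that, of x] by (meson order_trans)
    then show "x \<in> cbox ((- B) *\<^sub>R One) (B *\<^sub>R One)"
      by (simp add: mem_box abs_le_iff minus_le_iff)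
  qed
  ultimately show ?thesis using that by blast
qed

lemma pl_on_extend_closed_cube:
  assumes "closed_cube K1" "closed_cube K" "K1 \<subseteq> K" "pl_on K1 f"
  obtains F where "pl_on K F" "\<forall>y\<in>K1. F y = f y"
proof -
  obtain a b where ab: "K1 = cbox a b" "\<forall>i\<in>Basis. a \<bullet> i \<le> b \<bullet> i"
    using closed_cube_cbox[OF assms(1)] by metis
  obtain a' b' where ab': "K = cbox a' b'" "\<forall>i\<in>Basis. a' \<bullet> i \<le> b' \<bullet> i"
    using closed_cube_cbox[OF assms(2)] by metis
  have ordered: "\<forall>i\<in>Basis. a' \<bullet> i \<le> a \<bullet> i \<and> a \<bullet> i \<le> b \<bullet> i \<and> b \<bullet> i \<le> b' \<bullet> i"
    using assms(3) ab ab' subset_box(1)[of a b a' b'] by auto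
  have "pl_on K (\<lambda>y. f (clamp a b y))"
    using pl_on_clamp[OF ordered] assms(4) ab(1) ab'(1) by simp
  moreover have "\<forall>y\<in>K1. f (clamp a b y) = f y"
    using ab by simp
  ultimately show ?thesis using that by blast
qed

lemma RX_add:
  assumes "f \<in> RX P" "g \<in> RX P"
  shows "(\<lambda>y. f y + g y) \<in> RX P"
proof -
  obtain K1 f1 where 1: "closed_cube K1" "P \<subseteq> K1" "pl_on K1 f1" "f = (\<lambda>y. if y \<in> P then f1 y else 0)"
    using assms(1) unfolding RX_def by blast
  obtain K2 g1 where 2: "closed_cube K2" "P \<subseteq> K2" "pl_on K2 g1" "g = (\<lambda>y. if y \<in> P then g1 y else 0)"
    using assms(2) unfolding RX_def by blast
  have "bounded (K1 \<union> K2)"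
    using 1(1) 2(1) closed_cube_cbox bounded_cbox by (metis bounded_Un)
  then obtain K where K: "closed_cube K" "K1 \<union> K2 \<subseteq> K"
    using bounded_subset_closed_cube by metis
  obtain F where F: "pl_on K F" "\<forall>y\<in>K1. F y = f1 y"
    using pl_on_extend_closed_cube[OF 1(1) K(1) _ 1(3)] K(2) by auto
  obtain G where G: "pl_on K G" "\<forall>y\<in>K2. G y = g1 y"
    using pl_on_extend_closed_cube[OF 2(1) K(1) _ 2(3)] K(2) by auto
  have "(\<lambda>y. f y + g y) = (\<lambda>y. if y \<in> P then F y + G y else 0)"
    using 1(2,4) 2(2,4) F(2) G(2) by (auto simp: subset_iff)
  moreover have "pl_on K (\<lambda>y. F y + G y)"
    using F(1) G(1) by (rule pl_on_add)
  ultimately show ?thesis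
    unfolding RX_def using K 1(2) by blast
qed

lemma RX_cmult:
  assumes "f \<in> RX P"
  shows "(\<lambda>y. c * f y) \<in> RX P"
proof -
  obtain K f1 where "closed_cube K" "P \<subseteq> K" "pl_on K f1" "f = (\<lambda>y. if y \<in> P then f1 y else 0)"
    using assms unfolding RX_def by blast
  moreover have "(\<lambda>y. c * f y) = (\<lambda>y. if y \<in> P then c * f1 y else 0)"
    using calculation(4) by auto
  ultimately show ?thesis
    unfolding RX_def using pl_on_cmult by blast
qed

lemma RX_indicator:
  assumes "bounded P"
  shows "(\<lambda>y. if y \<in> P then 1 else 0) \<in> RX P"
proof -
  obtain K where "closed_cube K" "P \<subseteq> K"
    using bounded_subset_closed_cube[OF assms] by metis
  then show ?thesis
    unfolding RX_def using pl_on_const closed_cube_polytope by blast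
qed

lemma affine_convex_combination:
  assumes "finite V" "sum u V = 1" "\<forall>v\<in>V. h v = w \<bullet> v + c"
  shows "w \<bullet> (\<Sum>v\<in>V. u v *\<^sub>R v) + c = (\<Sum>v\<in>V. u v * h v)"
proof -
  have "w \<bullet> (\<Sum>v\<in>V. u v *\<^sub>R v) + c = (\<Sum>v\<in>V. u v * (w \<bullet> v)) + c * sum u V"
    using assms(2) by (simp add: inner_sum_right)
  also have "\<dots> = (\<Sum>v\<in>V. u v * h v)"
    using assms(3) by (simp add: sum_distrib_left sum.distrib algebra_simps)
  finally show ?thesis .
qed

lemma affine_bound_on_convex_hull:
  fixes f g :: "'a::euclidean_space \<Rightarrow> real"
  assumes V: "finite V"
    and f: "\<forall>y\<in>convex hull V. f y = wF \<bullet> y + cF" and g: "\<forall>y\<in>convex hull V. g y = wG \<bullet> y + cG"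
    and vertices: "\<forall>v\<in>V. \<bar>f v\<bar> \<le> M * g v" and y: "y \<in> convex hull V"
  shows "\<bar>f y\<bar> \<le> M * g y"
proof -
  obtain u where u: "\<forall>v\<in>V. 0 \<le> u v" "sum u V = 1" "(\<Sum>v\<in>V. u v *\<^sub>R v) = y"
    using y unfolding convex_hull_finite[OF V] by blast
  have V_hull: "V \<subseteq> convex hull V"
    by (rule hull_subset)
  have at_y: "h y = (\<Sum>v\<in>V. u v * h v)" if h: "\<forall>y\<in>convex hull V. h y = w \<bullet> y + c" for h w c
  proof -
    have "h y = w \<bullet> (\<Sum>v\<in>V. u v *\<^sub>R v) + c" using h y u(3) by blast
    also have "\<dots> = (\<Sum>v\<in>V. u v * h v)"
      using h V_hull by (intro affine_convex_combination[OF V u(2)]) blast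
    finally show ?thesis .
  qed
  have "\<bar>f y\<bar> \<le> (\<Sum>v\<in>V. \<bar>u v * f v\<bar>)"
    unfolding at_y[OF f] by (rule sum_abs)
  also have "\<dots> \<le> (\<Sum>v\<in>V. u v * (M * g v))"
  proof (rule sum_mono)
    fix v assume v: "v \<in> V"
    have "\<bar>u v * f v\<bar> = u v * \<bar>f v\<bar>" using u(1) v by (simp add: abs_mult)
    also have "\<dots> \<le> u v * (M * g v)" using u(1) v vertices by (simp add: mult_left_mono)
    finally show "\<bar>u v * f v\<bar> \<le> u v * (M * g v)" .
  qed
  also have "\<dots> = M * (\<Sum>v\<in>V. u v * g v)"
    by (simp add: sum_distrib_left mult.left_commute)
  also have "\<dots> = M * g y"
    unfolding at_y[OF g] ..
  finally show ?thesis .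
qed

lemma affine_dominated_on_polytope_nonneg:
  fixes f g :: "'a::euclidean_space \<Rightarrow> real"
  assumes "polytope Q"
    and f: "\<forall>y\<in>Q. f y = wF \<bullet> y + cF" and g: "\<forall>y\<in>Q. g y = wG \<bullet> y + cG"
    and g_nonneg: "\<forall>y\<in>Q. g y \<ge> 0" and zeros: "\<forall>y\<in>Q. g y = 0 \<longrightarrow> f y = 0"
  obtains M where "M \<ge> 0" "\<forall>y\<in>Q. \<bar>f y\<bar> \<le> M * g y"
proof -
  obtain V where V: "finite V" "Q = convex hull V"
    using assms(1) unfolding polytope_def by blast
  have VQ: "V \<subseteq> Q"
    unfolding V(2) by (rule hull_subset)
  define M where "M = (\<Sum>v\<in>V. \<bar>f v\<bar> / g v)"
  have ratio_nonneg: "\<bar>f v\<bar> / g v \<ge> 0" if "v \<in> V" for v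
    using g_nonneg VQ that by (simp add: subset_iff)
  have M_nonneg: "M \<ge> 0"
    unfolding M_def by (rule sum_nonneg) (rule ratio_nonneg)
  have "\<bar>f v\<bar> \<le> M * g v" if v: "v \<in> V" for v
  proof (cases "g v = 0")
    case True
    then show ?thesis using zeros VQ v by auto
  next
    case False
    then have "g v > 0" using g_nonneg VQ v by force
    moreover have "\<bar>f v\<bar> / g v \<le> M"
      unfolding M_def by (rule member_le_sum[OF v _ V(1)]) (rule ratio_nonneg, simp)
    ultimately show ?thesis by (simp add: divide_le_eq mult.commute)
  qed
  then have "\<forall>y\<in>Q. \<bar>f y\<bar> \<le> M * g y"
    using affine_bound_on_convex_hull[OF V(1)] f g unfolding V(2) by blast
  with M_nonneg show ?thesis by (rule that)
qed

lemma affine_dominated_on_polytope: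
  fixes f g :: "'a::euclidean_space \<Rightarrow> real"
  assumes Q: "polytope Q"
    and f: "\<forall>y\<in>Q. f y = wF \<bullet> y + cF" and g: "\<forall>y\<in>Q. g y = wG \<bullet> y + cG"
    and zeros: "\<forall>y\<in>Q. g y = 0 \<longrightarrow> f y = 0"
  obtains M where "\<forall>y\<in>Q. \<bar>f y\<bar> \<le> M * \<bar>g y\<bar>"
proof -
  define Q1 where "Q1 = Q \<inter> {y. wG \<bullet> y \<ge> - cG}"
  define Q2 where "Q2 = Q \<inter> {y. wG \<bullet> y \<le> - cG}"
  have "polytope Q1" "polytope Q2"
    unfolding Q1_def Q2_def
    by (intro polytope_Int_polyhedron Q polyhedron_halfspace_ge polyhedron_halfspace_le)+
  have f1: "\<forall>y\<in>Q1. f y = wF \<bullet> y + cF" and f2: "\<forall>y\<in>Q2. f y = wF \<bullet> y + cF"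
    using f by (simp_all add: Q1_def Q2_def)
  have g1: "\<forall>y\<in>Q1. g y = wG \<bullet> y + cG" and g2: "\<forall>y\<in>Q2. - g y = (- wG) \<bullet> y + (- cG)"
    using g by (simp_all add: Q1_def Q2_def)
  have g1_nonneg: "\<forall>y\<in>Q1. g y \<ge> 0" and g2_nonneg: "\<forall>y\<in>Q2. - g y \<ge> 0"
    using g by (simp_all add: Q1_def Q2_def)
  have zeros1: "\<forall>y\<in>Q1. g y = 0 \<longrightarrow> f y = 0" and zeros2: "\<forall>y\<in>Q2. - g y = 0 \<longrightarrow> f y = 0"
    using zeros by (simp_all add: Q1_def Q2_def)
  obtain M1 where M1: "M1 \<ge> 0" "\<forall>y\<in>Q1. \<bar>f y\<bar> \<le> M1 * g y"
    by (rule affine_dominated_on_polytope_nonneg[OF \<open>polytope Q1\<close> f1 g1 g1_nonneg zeros1])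
  obtain M2 where M2: "M2 \<ge> 0" "\<forall>y\<in>Q2. \<bar>f y\<bar> \<le> M2 * - g y"
    by (rule affine_dominated_on_polytope_nonneg[OF \<open>polytope Q2\<close> f2 g2 g2_nonneg zeros2])
  have "\<bar>f y\<bar> \<le> (M1 + M2) * \<bar>g y\<bar>" if y: "y \<in> Q" for y
  proof (cases "g y \<ge> 0")
    case True
    then have "y \<in> Q1" using y g by (simp add: Q1_def)
    then have "\<bar>f y\<bar> \<le> M1 * \<bar>g y\<bar>" using M1(2) True by simp
    also have "\<dots> \<le> (M1 + M2) * \<bar>g y\<bar>" using M2(1) by (simp add: mult_right_mono)
    finally show ?thesis .
  next
    case False
    then have "y \<in> Q2" using y g by (simp add: Q2_def)
    then have "\<bar>f y\<bar> \<le> M2 * \<bar>g y\<bar>" using M2(2) False by simp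
    also have "\<dots> \<le> (M1 + M2) * \<bar>g y\<bar>" using M1(1) by (simp add: mult_right_mono)
    finally show ?thesis .
  qed
  then have "\<forall>y\<in>Q. \<bar>f y\<bar> \<le> (M1 + M2) * \<bar>g y\<bar>" by blast
  then show ?thesis by (rule that)
qed

lemma dominated_on_finite_Union:
  fixes f g :: "'a \<Rightarrow> real"
  assumes "finite \<Q>" "\<And>Q. Q \<in> \<Q> \<Longrightarrow> \<exists>M. \<forall>y\<in>Q. \<bar>f y\<bar> \<le> M * \<bar>g y\<bar>"
  obtains m :: nat where "\<forall>y\<in>\<Union>\<Q>. \<bar>f y\<bar> \<le> real m * \<bar>g y\<bar>"
proof -
  have "\<forall>Q\<in>\<Q>. \<exists>M. \<forall>y\<in>Q. \<bar>f y\<bar> \<le> M * \<bar>g y\<bar>"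
    using assms(2) by blast
  then obtain M where M: "\<forall>Q\<in>\<Q>. \<forall>y\<in>Q. \<bar>f y\<bar> \<le> M Q * \<bar>g y\<bar>"
    by (rule bchoice[THEN exE])
  define m where "m = nat \<lceil>\<Sum>Q\<in>\<Q>. \<bar>M Q\<bar>\<rceil>"
  have "\<bar>f y\<bar> \<le> real m * \<bar>g y\<bar>" if Q: "Q \<in> \<Q>" and y: "y \<in> Q" for Q y
  proof -
    have "\<bar>M Q\<bar> \<le> (\<Sum>Q\<in>\<Q>. \<bar>M Q\<bar>)"
      by (rule member_le_sum[OF Q _ assms(1)]) simp
    also have "\<dots> \<le> real m"
      unfolding m_def by linarith
    finally have "M Q \<le> real m" by linarith
    then have "M Q * \<bar>g y\<bar> \<le> real m * \<bar>g y\<bar>"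
      by (simp add: mult_right_mono)
    with M Q y show ?thesis by force
  qed
  then have "\<forall>y\<in>\<Union>\<Q>. \<bar>f y\<bar> \<le> real m * \<bar>g y\<bar>" by blast
  then show ?thesis by (rule that)
qed

lemma polyhedron_affine_pieces:
  assumes "simplicial_polyhedron P" "pl_on K1 f" "pl_on K2 g" "P \<subseteq> K1" "P \<subseteq> K2"
  obtains \<Q> where "finite \<Q>" "\<Union>\<Q> = P"
    "\<And>Q. Q \<in> \<Q> \<Longrightarrow> polytope Q \<and> (\<exists>w c. \<forall>y\<in>Q. f y = w \<bullet> y + c) \<and> (\<exists>w c. \<forall>y\<in>Q. g y = w \<bullet> y + c)"
proof -
  obtain \<F> where \<F>: "finite \<F>" "\<forall>S\<in>\<F>. \<exists>k. k simplex S" "P = \<Union>\<F>"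
    using assms(1) unfolding simplicial_polyhedron_def by blast
  obtain \<T>1 where \<T>1: "triangulation \<T>1" "\<Union>\<T>1 = K1" "\<forall>T\<in>\<T>1. \<exists>w c. \<forall>y\<in>T. f y = w \<bullet> y + c"
    using assms(2) unfolding pl_on_def by blast
  obtain \<T>2 where \<T>2: "triangulation \<T>2" "\<Union>\<T>2 = K2" "\<forall>T\<in>\<T>2. \<exists>w c. \<forall>y\<in>T. g y = w \<bullet> y + c"
    using assms(3) unfolding pl_on_def by blast
  have simplex_polytope: "polytope S" if "\<exists>k. k simplex S" for S :: "'a set"
    using that simplex_imp_polytope by blast
  let ?\<Q> = "(\<lambda>(S, A, B). S \<inter> A \<inter> B) ` (\<F> \<times> \<T>1 \<times> \<T>2)"
  have "finite ?\<Q>"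
    using \<F>(1) \<T>1(1) \<T>2(1) by (auto simp: triangulation_def)
  moreover have "\<Union>?\<Q> = P"
  proof
    show "\<Union>?\<Q> \<subseteq> P" using \<F>(3) by auto
    show "P \<subseteq> \<Union>?\<Q>"
    proof
      fix y assume "y \<in> P"
      then obtain S A B where "S \<in> \<F>" "A \<in> \<T>1" "B \<in> \<T>2" "y \<in> S" "y \<in> A" "y \<in> B"
        using \<F>(3) \<T>1(2) \<T>2(2) assms(4,5) by blast
      then show "y \<in> \<Union>?\<Q>" by blast
    qed
  qed
  moreover have "polytope Q \<and> (\<exists>w c. \<forall>y\<in>Q. f y = w \<bullet> y + c) \<and> (\<exists>w c. \<forall>y\<in>Q. g y = w \<bullet> y + c)"
    if Q: "Q \<in> ?\<Q>" for Q
  proof -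
    obtain S A B where SAB: "S \<in> \<F>" "A \<in> \<T>1" "B \<in> \<T>2" and Q_eq: "Q = S \<inter> A \<inter> B"
      using Q by auto
    have "polytope S" "polytope A" "polytope B"
      using SAB \<F>(2) \<T>1(1) \<T>2(1) simplex_polytope unfolding triangulation_def by blast+
    then have "polytope Q"
      unfolding Q_eq by (intro polytope_Int)
    moreover obtain w1 c1 where "\<forall>y\<in>A. f y = w1 \<bullet> y + c1" using \<T>1(3) SAB(2) by blast
    moreover obtain w2 c2 where "\<forall>y\<in>B. g y = w2 \<bullet> y + c2" using \<T>2(3) SAB(3) by blast
    ultimately show ?thesis
      unfolding Q_eq by blast
  qed
  ultimately show ?thesis by (rule that)
qed

lemma RX_dominated:
  assumes "simplicial_polyhedron P" "f \<in> RX P" "g \<in> RX P"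
    and zeros: "\<forall>y\<in>P. g y = 0 \<longrightarrow> f y = 0"
  obtains m :: nat where "\<forall>y. \<bar>f y\<bar> \<le> real m * \<bar>g y\<bar>"
proof -
  obtain K1 f1 where 1: "P \<subseteq> K1" "pl_on K1 f1" "f = (\<lambda>y. if y \<in> P then f1 y else 0)"
    using assms(2) unfolding RX_def by blast
  obtain K2 g1 where 2: "P \<subseteq> K2" "pl_on K2 g1" "g = (\<lambda>y. if y \<in> P then g1 y else 0)"
    using assms(3) unfolding RX_def by blast
  obtain \<Q> where \<Q>: "finite \<Q>" "\<Union>\<Q> = P"
    "\<And>Q. Q \<in> \<Q> \<Longrightarrow> polytope Q \<and> (\<exists>w c. \<forall>y\<in>Q. f1 y = w \<bullet> y + c) \<and> (\<exists>w c. \<forall>y\<in>Q. g1 y = w \<bullet> y + c)"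
    using polyhedron_affine_pieces[OF assms(1) 1(2) 2(2) 1(1) 2(1)] by blast
  have "\<exists>M. \<forall>y\<in>Q. \<bar>f1 y\<bar> \<le> M * \<bar>g1 y\<bar>" if Q: "Q \<in> \<Q>" for Q
  proof -
    obtain wF cF wG cG where "polytope Q"
      and f1: "\<forall>y\<in>Q. f1 y = wF \<bullet> y + cF" and g1: "\<forall>y\<in>Q. g1 y = wG \<bullet> y + cG"
      using \<Q>(3)[OF Q] by blast
    moreover have "\<forall>y\<in>Q. g1 y = 0 \<longrightarrow> f1 y = 0"
      using zeros \<Q>(2) Q unfolding 1(3) 2(3) by auto
    ultimately obtain M where "\<forall>y\<in>Q. \<bar>f1 y\<bar> \<le> M * \<bar>g1 y\<bar>"
      by (rule affine_dominated_on_polytope)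
    then show ?thesis ..
  qed
  then obtain m :: nat where "\<forall>y\<in>\<Union>\<Q>. \<bar>f1 y\<bar> \<le> real m * \<bar>g1 y\<bar>"
    using dominated_on_finite_Union[OF \<Q>(1)] by blast
  then have "\<forall>y. \<bar>f y\<bar> \<le> real m * \<bar>g y\<bar>"
    using \<Q>(2) unfolding 1(3) 2(3) by simp
  then show ?thesis by (rule that)
qed

definition vanishing_ideal :: "('a \<Rightarrow> real) set \<Rightarrow> 'a \<Rightarrow> ('a \<Rightarrow> real) set" where
  "vanishing_ideal R x = {f \<in> R. f x = 0}"

lemma maximal_riesz_ideal_vanishing_ideal:
  assumes add: "\<And>f g. f \<in> R \<Longrightarrow> g \<in> R \<Longrightarrow> (\<lambda>y. f y + g y) \<in> R"
    and cmult: "\<And>c f. f \<in> R \<Longrightarrow> (\<lambda>y. c * f y) \<in> R"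
    and "e \<in> R" "e x \<noteq> 0"
  shows "maximal_riesz_ideal R (vanishing_ideal R x)"
proof -
  have "(\<lambda>y. 0) \<in> R"
    using cmult[OF \<open>e \<in> R\<close>, of 0] by simp
  then have ideal: "riesz_ideal R (vanishing_ideal R x)"
    unfolding riesz_ideal_def vanishing_ideal_def using add cmult by (auto dest: spec[of _ x])
  have proper: "vanishing_ideal R x \<noteq> R"
    using assms(3,4) by (auto simp: vanishing_ideal_def)
  have "J = vanishing_ideal R x"
    if J: "riesz_ideal R J" "vanishing_ideal R x \<subseteq> J" "J \<noteq> R" for J
  proof (rule ccontr)
    assume "J \<noteq> vanishing_ideal R x"
    then obtain f where f: "f \<in> J" "f x \<noteq> 0"
      using J(1,2) unfolding riesz_ideal_def vanishing_ideal_def by blast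
    have "h \<in> J" if h: "h \<in> R" for h
    proof -
      let ?c = "h x / f x"
      have fR: "f \<in> R" using J(1) f(1) unfolding riesz_ideal_def by blast
      have "(\<lambda>y. h y + (- ?c) * f y) \<in> R"
        using add[OF h cmult[OF fR]] .
      then have "(\<lambda>y. h y + (- ?c) * f y) \<in> vanishing_ideal R x"
        using f(2) by (simp add: vanishing_ideal_def)
      then have "(\<lambda>y. (h y + (- ?c) * f y) + ?c * f y) \<in> J"
        using J(1,2) f(1) unfolding riesz_ideal_def by blast
      then show ?thesis by simp
    qed
    then have "J = R" using J(1) unfolding riesz_ideal_def by blast
    with J(3) show False ..
  qed
  with ideal proper show ?thesis
    unfolding maximal_riesz_ideal_def by blast
qed

lemma bounded_simplicial_polyhedron:
  assumes "simplicial_polyhedron P"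
  shows "bounded P"
proof -
  obtain \<F> where "finite \<F>" "\<forall>S\<in>\<F>. \<exists>k. k simplex S" "P = \<Union>\<F>"
    using assms unfolding simplicial_polyhedron_def by blast
  moreover have "bounded S" if "\<exists>k. k simplex S" for S :: "'a set"
    using that compact_simplex compact_imp_bounded by blast
  ultimately show ?thesis
    by (simp add: bounded_Union)
qed

lemma principal_ideal_RX_eq_Inter_vanishing:
  assumes "simplicial_polyhedron P" "g \<in> RX P"
  shows "principal_ideal (RX P) g = RX P \<inter> \<Inter>(vanishing_ideal (RX P) ` {x \<in> P. g x = 0})"
proof
  show "principal_ideal (RX P) g \<subseteq> RX P \<inter> \<Inter>(vanishing_ideal (RX P) ` {x \<in> P. g x = 0})"
  proof
    fix f assume "f \<in> principal_ideal (RX P) g"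
    then obtain m :: nat where f: "f \<in> RX P" "\<forall>y. \<bar>f y\<bar> \<le> real m * \<bar>g y\<bar>"
      unfolding principal_ideal_def by blast
    then have "f x = 0" if "g x = 0" for x
      using f(2)[rule_format, of x] that by simp
    with f(1) show "f \<in> RX P \<inter> \<Inter>(vanishing_ideal (RX P) ` {x \<in> P. g x = 0})"
      by (auto simp: vanishing_ideal_def)
  qed
  show "RX P \<inter> \<Inter>(vanishing_ideal (RX P) ` {x \<in> P. g x = 0}) \<subseteq> principal_ideal (RX P) g"
  proof
    fix f assume f: "f \<in> RX P \<inter> \<Inter>(vanishing_ideal (RX P) ` {x \<in> P. g x = 0})"
    then have "\<forall>y\<in>P. g y = 0 \<longrightarrow> f y = 0"
      by (auto simp: vanishing_ideal_def)
    then obtain m :: nat where "\<forall>y. \<bar>f y\<bar> \<le> real m * \<bar>g y\<bar>"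
      using RX_dominated[OF assms(1) _ assms(2)] f by blast
    then show "f \<in> principal_ideal (RX P) g"
      using f unfolding principal_ideal_def by blast
  qed
qed

lemma strongly_semisimple_RX:
  assumes "simplicial_polyhedron P"
  shows "strongly_semisimple (RX P)"
  unfolding strongly_semisimple_def
proof
  fix g assume g: "g \<in> RX P"
  have "maximal_riesz_ideal (RX P) (vanishing_ideal (RX P) x)" if x: "x \<in> P" for x
  proof (rule maximal_riesz_ideal_vanishing_ideal)
    show "(\<lambda>y. if y \<in> P then 1 else 0) \<in> RX P"
      using bounded_simplicial_polyhedron[OF assms] by (rule RX_indicator)
    show "(if x \<in> P then 1 else 0) \<noteq> (0::real)"
      using x by simp
  qed (simp_all add: RX_add RX_cmult)
  then have "\<forall>I\<in>vanishing_ideal (RX P) ` {x \<in> P. g x = 0}. maximal_riesz_ideal (RX P) I"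
    by blast
  with principal_ideal_RX_eq_Inter_vanishing[OF assms g]
  show "\<exists>\<M>. (\<forall>I\<in>\<M>. maximal_riesz_ideal (RX P) I) \<and> principal_ideal (RX P) g = RX P \<inter> \<Inter>\<M>"
    by blast
qed

definition lex_nonpos :: "nat \<Rightarrow> (nat \<Rightarrow> real) \<Rightarrow> bool" where
  "lex_nonpos n p \<longleftrightarrow> (\<forall>m<n. (\<forall>j<m. p j = 0) \<longrightarrow> p m \<le> 0)"

lemma inner_proj_prefix_eq_0:
  assumes "\<forall>m<j. \<alpha> \<bullet> us ! m = 0"
  shows "\<alpha> \<bullet> proj_prefix us j v = 0"
  using assms by (simp add: proj_prefix_def inner_sum_right)

lemma frenet_frame_lex_nonpos:
  assumes frame: "frenet_frame xs x us"
    and below: "frequently (\<lambda>i. \<alpha> \<bullet> (xs i - x) \<le> 0) sequentially"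
  shows "lex_nonpos (length us) (\<lambda>j. \<alpha> \<bullet> us ! j)"
  unfolding lex_nonpos_def
proof (intro allI impI)
  fix j assume j: "j < length us" and zero: "\<forall>m<j. \<alpha> \<bullet> us ! m = 0"
  define r where "r i = xs i - x - proj_prefix us j (xs i - x)" for i
  have r_nonzero: "r i \<noteq> 0" for i
    using frame j unfolding frenet_frame_def r_def by blast
  have "(\<lambda>i. (1 / norm (r i)) *\<^sub>R r i) \<longlonglongrightarrow> us ! j"
    using frame j unfolding frenet_frame_def r_def by blast
  then have lim: "(\<lambda>i. \<alpha> \<bullet> ((1 / norm (r i)) *\<^sub>R r i)) \<longlonglongrightarrow> \<alpha> \<bullet> us ! j"
    by (intro tendsto_intros)
  have normalized_nonpos: "\<alpha> \<bullet> ((1 / norm (r i)) *\<^sub>R r i) \<le> 0" if "\<alpha> \<bullet> (xs i - x) \<le> 0" for i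
  proof -
    have "\<alpha> \<bullet> r i = \<alpha> \<bullet> (xs i - x)"
      using inner_proj_prefix_eq_0[OF zero] by (simp add: r_def inner_diff_right)
    then show ?thesis
      using that by (simp add: divide_nonpos_pos r_nonzero)
  qed
  from below have freq: "frequently (\<lambda>i. \<alpha> \<bullet> ((1 / norm (r i)) *\<^sub>R r i) \<le> 0) sequentially"
    by (rule frequently_elim1) (rule normalized_nonpos)
  show "\<alpha> \<bullet> us ! j \<le> 0"
  proof (rule ccontr)
    assume "\<not> \<alpha> \<bullet> us ! j \<le> 0"
    then have "eventually (\<lambda>i. 0 < \<alpha> \<bullet> ((1 / norm (r i)) *\<^sub>R r i)) sequentially"
      using lim by (intro order_tendstoD(1)) auto
    with freq have "frequently (\<lambda>i. False) sequentially"
      by (rule frequently_eventually_frequently[THEN frequently_elim1]) linarith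
    then show False by simp
  qed
qed

lemma lex_nonpos_partial_sums:
  fixes l q :: "nat \<Rightarrow> real"
  assumes "lex_nonpos n q" "\<forall>i<n. l i > 0"
  shows "lex_nonpos n (\<lambda>m. \<Sum>i<Suc m. l i * q i)"
  unfolding lex_nonpos_def
proof (intro allI impI)
  fix m assume m: "m < n" and sums_zero: "\<forall>j<m. (\<Sum>i<Suc j. l i * q i) = 0"
  have prefix_zero: "\<forall>i<j. q i = 0" if "j \<le> m" for j
    using that
  proof (induction j)
    case (Suc j)
    then have "\<forall>i<j. q i = 0" by simp
    then have "(\<Sum>i<Suc j. l i * q i) = l j * q j" by simp
    moreover have "(\<Sum>i<Suc j. l i * q i) = 0" and "l j > 0"
      using sums_zero assms(2) Suc.prems m by auto
    ultimately show ?case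
      using \<open>\<forall>i<j. q i = 0\<close> less_Suc_eq by auto
  qed simp
  then have "(\<Sum>i<Suc m. l i * q i) = l m * q m"
    using prefix_zero[of m] by simp
  moreover have "q m \<le> 0"
    using assms(1) m prefix_zero unfolding lex_nonpos_def by blast
  moreover have "l m > 0"
    using assms(2) m by blast
  ultimately show "(\<Sum>i<Suc m. l i * q i) \<le> 0"
    by (simp add: mult_nonneg_nonpos)
qed

lemma lex_nonpos_shift:
  assumes "lex_nonpos (Suc n) p" "p 0 = 0"
  shows "lex_nonpos n (\<lambda>m. p (Suc m))"
  unfolding lex_nonpos_def
proof (intro allI impI)
  fix m assume "m < n" and "\<forall>j<m. p (Suc j) = 0"
  with assms(2) have "\<forall>j<Suc m. p j = 0"
    by (auto simp: less_Suc_eq_0_disj)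
  with \<open>m < n\<close> assms(1) show "p (Suc m) \<le> 0"
    unfolding lex_nonpos_def by blast
qed

lemma eventually_at_right_power_sum_nonpos:
  fixes p :: "nat \<Rightarrow> real"
  assumes "lex_nonpos n p"
  shows "eventually (\<lambda>e. (\<Sum>m<n. e ^ (m + 1) * p m) \<le> 0) (at_right 0)"
  using assms
proof (induction n arbitrary: p)
  case 0
  then show ?case by simp
next
  case (Suc n)
  have factor: "(\<Sum>m<Suc n. e ^ (m + 1) * p m) = e * (p 0 + (\<Sum>m<n. e ^ (m + 1) * p (Suc m)))"
    for e :: real
    unfolding sum.lessThan_Suc_shift by (simp add: sum_distrib_left algebra_simps del: sum.lessThan_Suc)
  have pos: "eventually (\<lambda>e::real. e > 0) (at_right 0)"
    by (simp add: eventually_at_right_less)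
  have "p 0 \<le> 0"
    using Suc.prems unfolding lex_nonpos_def by auto
  then consider "p 0 = 0" | "p 0 < 0" by linarith
  then have "eventually (\<lambda>e. p 0 + (\<Sum>m<n. e ^ (m + 1) * p (Suc m)) \<le> 0) (at_right 0)"
  proof cases
    case 1
    with Suc.prems have "lex_nonpos n (\<lambda>m. p (Suc m))"
      by (rule lex_nonpos_shift)
    then show ?thesis
      using Suc.IH 1 by simp
  next
    case 2
    have "((\<lambda>e::real. \<Sum>m<n. e ^ (m + 1) * p (Suc m)) \<longlongrightarrow> (\<Sum>m<n. 0 ^ (m + 1) * p (Suc m))) (at_right 0)"
      by (intro tendsto_intros)
    then have "((\<lambda>e::real. \<Sum>m<n. e ^ (m + 1) * p (Suc m)) \<longlongrightarrow> 0) (at_right 0)"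
      by simp
    then have "eventually (\<lambda>e. (\<Sum>m<n. e ^ (m + 1) * p (Suc m)) < - p 0) (at_right 0)"
      using 2 by (intro order_tendstoD(2)) auto
    then show ?thesis
      by (rule eventually_mono) simp
  qed
  with pos show ?case
  proof (rule eventually_elim2)
    fix e :: real assume "0 < e" "p 0 + (\<Sum>m<n. e ^ (m + 1) * p (Suc m)) \<le> 0"
    then show "(\<Sum>m<Suc n. e ^ (m + 1) * p m) \<le> 0"
      unfolding factor by (simp add: mult_nonneg_nonpos)
  qed
qed

text \<open>The convex combination of the frame vertices with weights 1 - \<Sum>m. e^(m+1), e, e^2, ..., e^k.\<close>

definition frame_test_point :: "'a::euclidean_space \<Rightarrow> (nat \<Rightarrow> real) \<Rightarrow> 'a list \<Rightarrow> real \<Rightarrow> 'a" where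
  "frame_test_point x l us e =
     x + (\<Sum>m<length us. e ^ (m + 1) *\<^sub>R (frame_vertex x l us (Suc m) - x))"

lemma inner_frame_test_point:
  "\<alpha> \<bullet> frame_test_point x l us e =
     \<alpha> \<bullet> x + (\<Sum>m<length us. e ^ (m + 1) * (\<Sum>i<Suc m. l i * (\<alpha> \<bullet> us ! i)))"
  by (simp add: frame_test_point_def frame_vertex_def inner_add_right inner_sum_right)

lemma tendsto_frame_test_point: "(frame_test_point x l us \<longlongrightarrow> x) (at_right 0)"
proof -
  have "(frame_test_point x l us \<longlongrightarrow>
          x + (\<Sum>m<length us. 0 ^ (m + 1) *\<^sub>R (frame_vertex x l us (Suc m) - x))) (at_right 0)"
    unfolding frame_test_point_def[abs_def] by (intro tendsto_intros)
  then show ?thesis by simp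
qed

lemma eventually_frame_test_point_in_halfspace:
  assumes frame: "frenet_frame xs x us" and l: "\<forall>i<length us. l i > 0"
    and "\<alpha> \<bullet> x \<le> \<beta>" and below: "frequently (\<lambda>i. \<alpha> \<bullet> xs i \<le> \<beta>) sequentially"
  shows "eventually (\<lambda>e. \<alpha> \<bullet> frame_test_point x l us e \<le> \<beta>) (at_right 0)"
proof (cases "\<alpha> \<bullet> x < \<beta>")
  case True
  have "((\<lambda>e. \<alpha> \<bullet> frame_test_point x l us e) \<longlongrightarrow> \<alpha> \<bullet> x) (at_right 0)"
    by (intro tendsto_intros tendsto_frame_test_point)
  then have "eventually (\<lambda>e. \<alpha> \<bullet> frame_test_point x l us e < \<beta>) (at_right 0)"
    using True by (rule order_tendstoD(2))
  then show ?thesis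
    by (rule eventually_mono) simp
next
  case False
  with \<open>\<alpha> \<bullet> x \<le> \<beta>\<close> have x: "\<alpha> \<bullet> x = \<beta>" by simp
  from below have "frequently (\<lambda>i. \<alpha> \<bullet> (xs i - x) \<le> 0) sequentially"
    by (rule frequently_elim1) (simp add: inner_diff_right x)
  then have "lex_nonpos (length us) (\<lambda>j. \<alpha> \<bullet> us ! j)"
    using frame by (intro frenet_frame_lex_nonpos)
  then have "lex_nonpos (length us) (\<lambda>m. \<Sum>i<Suc m. l i * (\<alpha> \<bullet> us ! i))"
    using l by (rule lex_nonpos_partial_sums)
  then have "eventually (\<lambda>e. (\<Sum>m<length us. e ^ (m + 1) * (\<Sum>i<Suc m. l i * (\<alpha> \<bullet> us ! i))) \<le> 0)
               (at_right 0)"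
    by (rule eventually_at_right_power_sum_nonpos)
  then show ?thesis
    by (rule eventually_mono) (simp add: inner_frame_test_point x)
qed

lemma eventually_frame_test_point_in_polyhedron:
  assumes "polyhedron S" "x \<in> S" "frenet_frame xs x us" "\<forall>i<length us. l i > 0"
    and "frequently (\<lambda>i. xs i \<in> S) sequentially"
  shows "eventually (\<lambda>e. frame_test_point x l us e \<in> S) (at_right 0)"
proof -
  obtain \<H> where \<H>: "finite \<H>" "S = \<Inter>\<H>" "\<forall>h\<in>\<H>. \<exists>\<alpha> \<beta>. \<alpha> \<noteq> 0 \<and> h = {y. \<alpha> \<bullet> y \<le> \<beta>}"
    using assms(1) unfolding polyhedron_def by blast
  have "eventually (\<lambda>e. frame_test_point x l us e \<in> h) (at_right 0)" if h: "h \<in> \<H>" for h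
  proof -
    obtain \<alpha> \<beta> where h_eq: "h = {y. \<alpha> \<bullet> y \<le> \<beta>}"
      using \<H>(3) h by blast
    have "\<alpha> \<bullet> x \<le> \<beta>"
      using assms(2) \<H>(2) h h_eq by blast
    moreover from assms(5) have "frequently (\<lambda>i. \<alpha> \<bullet> xs i \<le> \<beta>) sequentially"
      by (rule frequently_elim1) (use \<H>(2) h h_eq in blast)
    ultimately show ?thesis
      using eventually_frame_test_point_in_halfspace[OF assms(3,4)] by (simp add: h_eq)
  qed
  then have "eventually (\<lambda>e. \<forall>h\<in>\<H>. frame_test_point x l us e \<in> h) (at_right 0)"
    using \<H>(1) by (simp add: eventually_ball_finite)
  then show ?thesis
    by (rule eventually_mono) (simp add: \<H>(2))
qed

lemma frame_test_point_in_convex_hull: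
  assumes "e \<ge> 0" "(\<Sum>m<length us. e ^ (m + 1)) \<le> 1"
  shows "frame_test_point x l us e \<in> convex hull (frame_vertex x l us ` {..length us})"
proof -
  let ?k = "length us" and ?V = "frame_vertex x l us"
  define \<mu> where "\<mu> m = (if m = 0 then 1 - (\<Sum>m<?k. e ^ (m + 1)) else e ^ m)" for m
  have "?V 0 = x"
    by (simp add: frame_vertex_def)
  then have "(\<Sum>m\<le>?k. \<mu> m *\<^sub>R ?V m) =
      (1 - (\<Sum>m<?k. e ^ (m + 1))) *\<^sub>R x + (\<Sum>m<?k. e ^ (m + 1) *\<^sub>R ?V (Suc m))"
    unfolding lessThan_Suc_atMost[symmetric] sum.lessThan_Suc_shift by (simp add: \<mu>_def)
  also have "\<dots> = frame_test_point x l us e"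
    unfolding frame_test_point_def
    by (simp add: sum_subtractf scaleR_sum_left algebra_simps)
  finally have "(\<Sum>m\<le>?k. \<mu> m *\<^sub>R ?V m) = frame_test_point x l us e" .
  moreover have "(\<Sum>m\<le>?k. \<mu> m *\<^sub>R ?V m) \<in> convex hull (?V ` {..?k})"
  proof (rule convex_sum)
    show "sum \<mu> {..?k} = 1"
      unfolding lessThan_Suc_atMost[symmetric] sum.lessThan_Suc_shift by (simp add: \<mu>_def)
    show "0 \<le> \<mu> m" for m
      using assms by (simp add: \<mu>_def)
  qed (auto intro: hull_inc)
  ultimately show ?thesis by simp
qed

lemma eventually_frame_test_point_in_convex_hull:
  "eventually (\<lambda>e. frame_test_point x l us e \<in> convex hull (frame_vertex x l us ` {..length us}))
     (at_right 0)"
proof -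
  have "((\<lambda>e::real. \<Sum>m<length us. e ^ (m + 1)) \<longlongrightarrow> (\<Sum>m<length us. 0 ^ (m + 1))) (at_right 0)"
    by (intro tendsto_intros)
  then have "((\<lambda>e::real. \<Sum>m<length us. e ^ (m + 1)) \<longlongrightarrow> 0) (at_right 0)"
    by simp
  then have "eventually (\<lambda>e::real. (\<Sum>m<length us. e ^ (m + 1)) < 1) (at_right 0)"
    by (rule order_tendstoD(2)) simp
  moreover have "eventually (\<lambda>e::real. e > 0) (at_right 0)"
    by (simp add: eventually_at_right_less)
  ultimately show ?thesis
    by eventually_elim (simp add: frame_test_point_in_convex_hull)
qed

lemma frame_test_point_notin_convex_hull:
  assumes orth: "\<forall>i<length us. \<forall>j<length us. us ! i \<bullet> us ! j = (if i = j then 1 else 0)"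
    and "us \<noteq> []" "\<forall>i<length us. l i > 0" "e > 0"
  shows "frame_test_point x l us e \<notin> convex hull (frame_vertex x l us ` {..<length us})"
proof -
  obtain k where k: "length us = Suc k"
    using assms(2) by (cases us) auto
  let ?w = "us ! k"
  have w: "?w \<bullet> us ! i = (if i = k then 1 else 0)" if "i < Suc k" for i
    using orth that k by (metis lessI)
  have "frame_vertex x l us ` {..<length us} \<subseteq> {z. ?w \<bullet> z = ?w \<bullet> x}"
  proof
    fix z assume "z \<in> frame_vertex x l us ` {..<length us}"
    then obtain m where "m < Suc k" "z = frame_vertex x l us m"
      using k by auto
    moreover have "(\<Sum>i<m. l i * (?w \<bullet> us ! i)) = 0" if "m < Suc k"
      using that w by (intro sum.neutral) auto
    ultimately show "z \<in> {z. ?w \<bullet> z = ?w \<bullet> x}"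
      by (simp add: frame_vertex_def inner_add_right inner_sum_right)
  qed
  then have hull: "convex hull (frame_vertex x l us ` {..<length us}) \<subseteq> {z. ?w \<bullet> z = ?w \<bullet> x}"
    by (intro hull_minimal convex_hyperplane)
  have inner_sums: "(\<Sum>i<Suc m. l i * (?w \<bullet> us ! i)) = (if m = k then l k else 0)"
    if "m < Suc k" for m
    using that w by (auto simp: sum.If_cases)
  have "(\<Sum>m<length us. e ^ (m + 1) * (\<Sum>i<Suc m. l i * (?w \<bullet> us ! i))) =
      (\<Sum>m<Suc k. e ^ (m + 1) * (if m = k then l k else 0))"
    unfolding k using inner_sums by (intro sum.cong) auto
  also have "\<dots> = e ^ (k + 1) * l k"
  proof -
    have "(\<Sum>m<k. e ^ (m + 1) * (if m = k then l k else 0)) = 0"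
      by (intro sum.neutral) auto
    then show ?thesis by simp
  qed
  finally have "?w \<bullet> frame_test_point x l us e = ?w \<bullet> x + e ^ (k + 1) * l k"
    unfolding inner_frame_test_point by simp
  moreover have "e ^ (k + 1) * l k > 0"
    using assms(3,4) k by simp
  ultimately have "?w \<bullet> frame_test_point x l us e \<noteq> ?w \<bullet> x"
    by linarith
  with hull show ?thesis by blast
qed

lemma frequently_in_closed_member:
  assumes "finite \<F>" "\<forall>S\<in>\<F>. closed S" "\<forall>i. xs i \<in> \<Union>\<F>" "xs \<longlonglongrightarrow> x"
  obtains S where "S \<in> \<F>" "x \<in> S" "frequently (\<lambda>i. xs i \<in> S) sequentially"
proof -
  have "frequently (\<lambda>i. \<exists>S\<in>\<F>. xs i \<in> S) sequentially"
    using assms(3) by (simp add: frequently_def)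
  then have "\<exists>S\<in>\<F>. frequently (\<lambda>i. xs i \<in> S) sequentially"
    by (rule frequently_bex_finite[OF assms(1)])
  then obtain S where S: "S \<in> \<F>" and freq: "frequently (\<lambda>i. xs i \<in> S) sequentially"
    by blast
  have "x \<in> S"
  proof (rule ccontr)
    assume "x \<notin> S"
    then have "eventually (\<lambda>i. xs i \<notin> S) sequentially"
      using topological_tendstoD[OF assms(4), of "- S"] assms(2) S by (simp add: open_Compl)
    with freq have "frequently (\<lambda>i. False) sequentially"
      by (rule frequently_eventually_frequently[THEN frequently_elim1]) simp
    then show False by simp
  qed
  then show ?thesis by (rule that[OF S _ freq])
qed

lemma no_outgoing_tangent:
  assumes "simplicial_polyhedron P"
  shows "\<not> outgoing_tangent P x us"
proof
  assume "outgoing_tangent P x us"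
  then obtain xs l where xs: "\<forall>i. xs i \<in> P" and frame: "frenet_frame xs x us"
    and l: "\<forall>i<length us. l i > 0"
    and hulls: "convex hull (frame_vertex x l us ` {..length us}) \<inter> P =
                convex hull (frame_vertex x l us ` {..<length us}) \<inter> P"
    unfolding outgoing_tangent_def tangent_def by blast
  obtain \<F> where \<F>: "finite \<F>" "\<forall>S\<in>\<F>. \<exists>k. k simplex S" "P = \<Union>\<F>"
    using assms unfolding simplicial_polyhedron_def by blast
  have "xs \<longlonglongrightarrow> x"
    using frame unfolding frenet_frame_def by blast
  then obtain S where S: "S \<in> \<F>" "x \<in> S" and freq: "frequently (\<lambda>i. xs i \<in> S) sequentially"
    using frequently_in_closed_member[OF \<F>(1)] \<F>(2,3) xs closed_simplex by metis
  obtain k where simplex: "k simplex S"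
    using \<F>(2) S(1) by blast
  have "eventually (\<lambda>e. frame_test_point x l us e \<in> S) (at_right 0)"
    using simplex_imp_polyhedron[OF simplex] S(2) frame l freq
    by (rule eventually_frame_test_point_in_polyhedron)
  moreover note eventually_frame_test_point_in_convex_hull[of x l us]
  moreover have "eventually (\<lambda>e::real. e > 0) (at_right 0)"
    by (simp add: eventually_at_right_less)
  ultimately have "eventually (\<lambda>e. frame_test_point x l us e \<in> S \<and>
      frame_test_point x l us e \<in> convex hull (frame_vertex x l us ` {..length us}) \<and> e > 0)
      (at_right 0)"
    by (intro eventually_conj)
  then obtain e where e: "frame_test_point x l us e \<in> S"
      "frame_test_point x l us e \<in> convex hull (frame_vertex x l us ` {..length us})" "e > 0"
    using eventually_happens'[OF trivial_limit_at_right_real] by blast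
  then have "frame_test_point x l us e \<in> convex hull (frame_vertex x l us ` {..<length us})"
    using hulls S(1) \<F>(3) by blast
  moreover have "us \<noteq> []" "\<forall>i<length us. \<forall>j<length us. us ! i \<bullet> us ! j = (if i = j then 1 else 0)"
    using frame unfolding frenet_frame_def by auto
  ultimately show False
    using frame_test_point_notin_convex_hull l e(3) by blast
qed

theorem proposition6p2:
  fixes P :: "'a::euclidean_space set"
  assumes "simplicial_polyhedron P" and "P \<noteq> {}"
  shows "strongly_semisimple (RX P) \<and> \<not> (\<exists>x us. outgoing_tangent P x us)"
  using strongly_semisimple_RX[OF assms(1)] no_outgoing_tangent[OF assms(1)] by blast

end
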